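(* Let $C_*>1$. There exists a constant $C>0$ depending only on $C_*$ such that the following holds. Let $\mathscr{T}$ be a $C_*$-regular triangular complex in $\mathbb{R}^3$ and $n$ a pseudo-unit edge director on $\mathscr{T}$. If $e=\kappa\cap\kappa'\in\mathscr{E}(\mathscr{T})$ satisfies $(\mathrm{diam}\,\kappa)(|Dn_\kappa|+|Dn_{\kappa'}|)<C$, then \[ |n(e)-\bar n(\kappa)|\le C'\,(\mathrm{diam}\,\kappa)(|Dn_\kappa|+|Dn_{\kappa'}|) \] for a constant $C'$ depending only on $C_*$.
   Context: A triangle is $\kappa=\mathrm{conv}(x,y,z)\subset\mathbb{R}^3$ with $x,y,z$ not collinear, with unit normal $\bar n(\kappa)$ one (chosen) of $\pm\frac{(y-x)\times(z-x)}{|(y-x)\times(z-x)|}$. A triangular complex is a finite family of triangles any two distinct of which meet in the empty set, a common vertex, or a whole common edge; $\mathscr{E}(\mathscr{T})$ is its set of edges; it is $C_*$-regular if $\mathcal{H}^2(\kappa)\ge C_*^{-1}(\mathrm{diam}\,\kappa)^2$ for all $\kappa$. For an edge $e=\kappa\cap\kappa'$, let $n_0(e)=\frac{\bar n(\kappa)+\bar n(\kappa')}{|\bar n(\kappa)+\bar n(\kappa')|}$. A pseudo-unit edge director is a map $n:\mathscr{E}(\mathscr{T})\to\mathbb{R}^3$ with $n(e)\cdot\tau(e)=0$ ($\tau(e)$ a unit vector along $e$) and $n(e)\cdot n_0(e)=1$ for every edge $e$. On each triangle $\kappa$, $n$ is extended to the unique affine map $\kappa\to\mathbb{R}^3$ taking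 the value $n(e)$ at the midpoint of each edge $e$ of $\kappa$, and $Dn_\kappa\in\mathbb{R}^{3\times3}$ is its constant gradient precomposed with the orthogonal projection onto the plane of $\kappa$. *)

theory Defs
  imports "HOL-Analysis.Analysis" "HOL-Analysis.Cross3"
begin

type_synonym R3 = "real^3"

definition tri_verts :: "R3 set \<Rightarrow> R3 set" where
  "tri_verts K = {v. v extreme_point_of K}"

definition is_triangle :: "R3 set \<Rightarrow> bool" where
  "is_triangle K \<longleftrightarrow> (\<exists>x y z. \<not> collinear {x, y, z} \<and> K = convex hull {x, y, z})"

definition tri_edges :: "R3 set \<Rightarrow> R3 set set" where
  "tri_edges K = {closed_segment a b | a b. a \<in> tri_verts K \<and> b \<in> tri_verts K \<and> a \<noteq> b}"

definition is_unit_normal :: "R3 set \<Rightarrow> R3 \<Rightarrow> bool" where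
  "is_unit_normal K v \<longleftrightarrow> (\<exists>x y z. \<not> collinear {x, y, z} \<and> K = convex hull {x, y, z} \<and>
      (v = (1 / norm (cross3 (y - x) (z - x))) *\<^sub>R cross3 (y - x) (z - x) \<or>
       v = - ((1 / norm (cross3 (y - x) (z - x))) *\<^sub>R cross3 (y - x) (z - x))))"

definition triangular_complex :: "R3 set set \<Rightarrow> bool" where
  "triangular_complex T \<longleftrightarrow> finite T \<and> (\<forall>K\<in>T. is_triangle K) \<and>
     (\<forall>K\<in>T. \<forall>K'\<in>T. K \<noteq> K' \<longrightarrow>
        K \<inter> K' = {} \<or>
        (\<exists>v. v \<in> tri_verts K \<and> v \<in> tri_verts K' \<and> K \<inter> K' = {v}) \<or>
        (\<exists>e. e \<in> tri_edges K \<and> e \<in> tri_edges K' \<and> K \<inter> K' = e))"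

definition complex_edges :: "R3 set set \<Rightarrow> R3 set set" where
  "complex_edges T = (\<Union>K\<in>T. tri_edges K)"

text \<open>Two-dimensional Hausdorff measure (area) of a triangle conv{x,y,z}:
  |(y-x) x (z-x)|/2 (independent of the vertex labelling).\<close>
definition tri_area :: "R3 set \<Rightarrow> real" where
  "tri_area K = (THE A. \<exists>x y z. \<not> collinear {x, y, z} \<and> K = convex hull {x, y, z} \<and>
                       A = norm (cross3 (y - x) (z - x)) / 2)"

definition regular_complex :: "real \<Rightarrow> R3 set set \<Rightarrow> bool" where
  "regular_complex Cs T \<longleftrightarrow> triangular_complex T \<and>
     (\<forall>K\<in>T. tri_area K \<ge> (1 / Cs) * (diameter K)\<^sup>2)"

definition n0 :: "(R3 set \<Rightarrow> R3) \<Rightarrow> R3 set \<Rightarrow> R3 set \<Rightarrow> R3" where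
  "n0 nb K K' = (1 / norm (nb K + nb K')) *\<^sub>R (nb K + nb K')"

definition pseudo_unit_director ::
    "R3 set set \<Rightarrow> (R3 set \<Rightarrow> R3) \<Rightarrow> (R3 set \<Rightarrow> R3) \<Rightarrow> bool" where
  "pseudo_unit_director T nb n \<longleftrightarrow>
     (\<forall>e\<in>complex_edges T.
        (\<forall>a b. e = closed_segment a b \<longrightarrow> n e \<bullet> (b - a) = 0) \<and>
        (\<forall>K\<in>T. \<forall>K'\<in>T. K \<noteq> K' \<and> K \<inter> K' = e \<longrightarrow> n e \<bullet> n0 nb K K' = 1))"

text \<open>Dn_K: gradient of the affine interpolant of the midpoint values, precomposed with the
  orthogonal projection onto the plane of K, as a 3x3 matrix.\<close>
definition Dn :: "(R3 set \<Rightarrow> R3) \<Rightarrow> R3 set \<Rightarrow> real^3^3" where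
  "Dn n K = (THE M. (\<forall>a b c. a \<in> tri_verts K \<and> b \<in> tri_verts K \<and> c \<in> tri_verts K \<and>
                         a \<noteq> b \<and> a \<noteq> c \<and> b \<noteq> c \<longrightarrow>
                  M *v ((1/2) *\<^sub>R (a + b) - (1/2) *\<^sub>R (a + c)) =
                    n (closed_segment a b) - n (closed_segment a c)) \<and>
                (\<forall>w. (\<forall>p\<in>K. \<forall>q\<in>K. w \<bullet> (p - q) = 0) \<longrightarrow> M *v w = 0))"

end

theory Submission
  imports Defs
begin

(* Let e = [a,b] be an edge of a triangle L = conv{a,b,c}. The defining property of the discrete
   gradient reads Dn_L (b - c) = 2 (n(e) - n([a,c])), and n(e), n([a,c]) are orthogonal to b - a and
   c - a respectively. Hence n(e).(c - a) is of order |Dn_L| diam(L)^2, and n(e) x ((b - a) x (c - a))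
   = (n(e).(c - a)) (b - a); dividing by the area, which is at least diam(L)^2 / C_* by regularity,
   gives |n(e) x nbar(L)| <= C_*/4 |b - a| |Dn_L|. On both triangles K, K' of e this yields
   |n(e) x nbar(K)|, |n(e) x nbar(K')| <= delta := C_*/4 diam(K) (|Dn_K| + |Dn_K'|). The normalisation
   n(e).n_0(e) = 1 then forces |nbar(K) - nbar(K')| <= 2 delta and, if delta <= 1/2,
   |n(e) - nbar(K)| <= 5 delta. So C = 2/C_* and C' = 5 C_*/4 work. *)

section \<open>Vector algebra in three dimensions\<close>

lemma norm_matrix_vector_mult_le:
  fixes A :: "real^'n^'m"
  shows "norm (A *v x) \<le> norm A * norm x"
proof -
  have row: "(A *v x) $ i = A $ i \<bullet> x" for i
    by (simp add: matrix_vector_mult_def inner_vec_def mult.commute)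
  have "(norm (A *v x))\<^sup>2 = (\<Sum>i\<in>UNIV. (A $ i \<bullet> x)\<^sup>2)"
    by (simp add: norm_vec_def L2_set_def row) (simp add: sum_nonneg)
  also have "\<dots> \<le> (\<Sum>i\<in>UNIV. (norm (A $ i))\<^sup>2 * (norm x)\<^sup>2)"
  proof (rule sum_mono)
    fix i
    show "(A $ i \<bullet> x)\<^sup>2 \<le> (norm (A $ i))\<^sup>2 * (norm x)\<^sup>2"
      using power_mono[OF Cauchy_Schwarz_ineq2[of "A $ i" x] abs_ge_zero, of 2]
      by (simp add: power_mult_distrib)
  qed
  also have "\<dots> = (norm A * norm x)\<^sup>2"
  proof -
    have "(norm A)\<^sup>2 = (\<Sum>i\<in>UNIV. (norm (A $ i))\<^sup>2)"
      by (simp add: power2_norm_eq_inner inner_vec_def)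
    then show ?thesis
      by (simp only: sum_distrib_right power_mult_distrib)
  qed
  finally show ?thesis
    by (rule power2_le_imp_le) simp
qed

lemma norm_cross_le: "norm (cross3 x y) \<le> norm x * norm y"
proof (rule power2_le_imp_le)
  show "(norm (cross3 x y))\<^sup>2 \<le> (norm x * norm y)\<^sup>2"
    using norm_cross_dot[of x y] zero_le_power2[of "x \<bullet> y"] by linarith
qed simp

lemma norm_cross_unit_eq:
  assumes "norm u = 1"
  shows "norm (cross3 x u) = norm (x - (x \<bullet> u) *\<^sub>R u)"
proof -
  have "u \<bullet> u = 1"
    using assms by (simp add: dot_square_norm)
  have "(norm (x - (x \<bullet> u) *\<^sub>R u))\<^sup>2 = (x - (x \<bullet> u) *\<^sub>R u) \<bullet> (x - (x \<bullet> u) *\<^sub>R u)"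
    by (rule power2_norm_eq_inner)
  also have "\<dots> = x \<bullet> x - (x \<bullet> u)\<^sup>2"
    using \<open>u \<bullet> u = 1\<close> by (simp add: inner_diff_left inner_diff_right inner_commute power2_eq_square)
  finally have "(norm (x - (x \<bullet> u) *\<^sub>R u))\<^sup>2 = (norm x)\<^sup>2 - (x \<bullet> u)\<^sup>2"
    by (simp add: power2_norm_eq_inner)
  moreover have "(norm (cross3 x u))\<^sup>2 = (norm x)\<^sup>2 - (x \<bullet> u)\<^sup>2"
    using norm_cross[of x u] assms by simp
  ultimately show ?thesis
    by (metis norm_ge_zero power2_eq_iff_nonneg)
qed

lemma cross_frame_expansion:
  fixes u v x :: "real^3"
  defines "N \<equiv> cross3 u v"
  shows "(N \<bullet> N) *\<^sub>R x = (x \<bullet> cross3 v N) *\<^sub>R u + (x \<bullet> cross3 N u) *\<^sub>R v + (x \<bullet> N) *\<^sub>R N"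
  unfolding N_def vec_eq_iff forall_3 by (simp add: cross3_def inner_vec_def sum_3 algebra_simps)

lemma matrix_vector_mult_cross_frame:
  fixes M :: "real^3^3" and u v x :: "real^3"
  defines "N \<equiv> cross3 u v"
  shows "(N \<bullet> N) *\<^sub>R (M *v x) =
    (x \<bullet> cross3 v N) *\<^sub>R (M *v u) + (x \<bullet> cross3 N u) *\<^sub>R (M *v v) + (x \<bullet> N) *\<^sub>R (M *v N)"
  using arg_cong[OF cross_frame_expansion[of u v x], of "(*v) M"]
  by (simp add: N_def matrix_vector_mult_scaleR matrix_vector_right_distrib)

lemma matrix_eq_on_cross_frame:
  fixes M M' :: "real^3^3"
  assumes "cross3 u v \<noteq> 0" "M *v u = M' *v u" "M *v v = M' *v v"
    "M *v cross3 u v = M' *v cross3 u v"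
  shows "M = M'"
proof (rule iffD2[OF matrix_eq], rule allI)
  fix x
  have "(cross3 u v \<bullet> cross3 u v) *\<^sub>R (M *v x) = (cross3 u v \<bullet> cross3 u v) *\<^sub>R (M' *v x)"
    using assms(2-4) by (simp only: matrix_vector_mult_cross_frame)
  then show "M *v x = M' *v x"
    using assms(1) by simp
qed

(* With N = u x v and D = |N|^2, the dual basis of (u, v, N) is ((v x N)/D, (N x u)/D, N/D). *)
lemma ex_matrix_on_cross_frame:
  fixes u v f g h :: "real^3"
  assumes "cross3 u v \<noteq> 0"
  obtains M :: "real^3^3" where "M *v u = f" "M *v v = g" "M *v cross3 u v = h"
proof
  define N where "N = cross3 u v"
  define D where "D = N \<bullet> N"
  define F where "F x = ((x \<bullet> cross3 v N) / D) *\<^sub>R f + ((x \<bullet> cross3 N u) / D) *\<^sub>R g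
    + ((x \<bullet> N) / D) *\<^sub>R h" for x
  have "linear F"
    unfolding F_def linear_iff by (simp add: inner_add_left add_divide_distrib algebra_simps)
  then have M: "matrix F *v x = F x" for x
    by (metis matrix_vector_mul(2))
  have "D \<noteq> 0"
    using assms by (simp add: D_def N_def)
  moreover have "u \<bullet> cross3 v N = D" "v \<bullet> cross3 N u = D" "N \<bullet> N = D"
    using cross_triple[of u v N] cross_triple[of N u v] by (simp_all add: D_def N_def inner_commute)
  moreover have "u \<bullet> N = 0" "v \<bullet> N = 0"
    by (simp_all add: N_def dot_cross_self)
  ultimately show "matrix F *v u = f" "matrix F *v v = g" "matrix F *v cross3 u v = h"
    by (simp_all add: M F_def dot_cross_self flip: N_def)
qed

lemma orthogonal_both_imp_parallel_cross:
  fixes u v w :: "real^3"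
  assumes "w \<bullet> u = 0" "w \<bullet> v = 0"
  shows "(cross3 u v \<bullet> cross3 u v) *\<^sub>R w = (w \<bullet> cross3 u v) *\<^sub>R cross3 u v"
proof -
  have "w \<bullet> cross3 v (cross3 u v) = 0" "w \<bullet> cross3 (cross3 u v) u = 0"
    using assms by (simp_all add: Lagrange cross_skew[of "cross3 u v"] inner_diff_right)
  then show ?thesis
    using cross_frame_expansion[of u v w] by simp
qed

lemma matrix_vector_mult_orthogonal_eq_0:
  fixes M :: "real^3^3"
  assumes "cross3 u v \<noteq> 0" "M *v cross3 u v = 0" "w \<bullet> u = 0" "w \<bullet> v = 0"
  shows "M *v w = 0"
proof -
  have "(cross3 u v \<bullet> cross3 u v) *\<^sub>R (M *v w) = (w \<bullet> cross3 u v) *\<^sub>R (M *v cross3 u v)"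
    using orthogonal_both_imp_parallel_cross[OF assms(3,4)]
    by (metis matrix_vector_mult_scaleR)
  then show ?thesis
    using assms(1,2) by simp
qed

lemma norm_diff_le_of_cross_le:
  fixes v n1 n2 :: "real^3"
  assumes n1: "norm n1 = 1" and n2: "norm n2 = 1" and s0: "n1 + n2 \<noteq> 0"
    and vs: "v \<bullet> (n1 + n2) = norm (n1 + n2)"
    and d1: "norm (cross3 v n1) \<le> \<delta>" and d2: "norm (cross3 v n2) \<le> \<delta>"
  shows "norm (n1 - n2) \<le> 2 * \<delta>"
proof -
  define s where "s = n1 + n2"
  define r where "r = n1 - n2"
  have "n1 \<bullet> n1 = 1" "n2 \<bullet> n2 = 1"
    using n1 n2 by (simp_all add: dot_square_norm)
  then have "r \<bullet> s = 0"
    unfolding r_def s_def inner_add_right inner_diff_left by (simp add: inner_commute)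
  then have "norm s * (norm r)\<^sup>2 = cross3 v r \<bullet> cross3 s r"
    using vs by (simp add: dot_cross s_def power2_norm_eq_inner inner_commute)
  also have "\<dots> \<le> norm (cross3 v r) * norm (cross3 s r)"
    by (rule norm_cauchy_schwarz)
  also have "\<dots> \<le> 2 * \<delta> * (norm s * norm r)"
  proof (rule mult_mono)
    show "0 \<le> 2 * \<delta>"
      using d1 norm_ge_zero[of "cross3 v n1"] by linarith
    show "norm (cross3 v r) \<le> 2 * \<delta>"
      using d1 d2 norm_triangle_ineq4[of "cross3 v n1" "cross3 v n2"]
      by (simp add: r_def Cross3.right_diff_distrib)
  qed (simp_all add: norm_cross_le)
  finally have "norm s * (norm r * norm r) \<le> norm s * (2 * \<delta> * norm r)"
    by (simp add: power2_eq_square algebra_simps)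
  moreover have "norm s > 0"
    using s0 by (simp add: s_def)
  ultimately have "norm r * norm r \<le> 2 * \<delta> * norm r"
    by simp
  moreover have "0 \<le> \<delta>"
    using d1 norm_ge_zero[of "cross3 v n1"] by linarith
  ultimately show ?thesis
    unfolding r_def[symmetric] using mult_right_le_imp_le[of "norm r" "norm r" "2 * \<delta>"]
    by (cases "norm r = 0") simp_all
qed

lemma abs_inner_unit_sub_1_le:
  fixes v n1 n2 :: "real^3"
  assumes n1: "norm n1 = 1" and n2: "norm n2 = 1"
    and vs: "v \<bullet> (n1 + n2) = norm (n1 + n2)" and d1: "norm (cross3 v n1) \<le> \<delta>"
    and s_lower: "2 - 2 * \<delta> \<le> norm (n1 + n2)" and small: "\<delta> \<le> 1/2"
  shows "\<bar>v \<bullet> n1 - 1\<bar> \<le> 4 * \<delta>"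
proof -
  define s where "s = n1 + n2"
  define \<alpha> where "\<alpha> = v \<bullet> n1"
  define p where "p = v - \<alpha> *\<^sub>R n1"
  have p: "norm p \<le> \<delta>"
    using d1 norm_cross_unit_eq[OF n1] by (simp add: p_def \<alpha>_def)
  have s_upper: "norm s \<le> 2"
    using norm_triangle_ineq[of n1 n2] n1 n2 by (simp add: s_def)
  have "n1 \<bullet> n1 = 1" "n2 \<bullet> n2 = 1"
    using n1 n2 by (simp_all add: dot_square_norm)
  then have "n1 \<bullet> s = (norm s)\<^sup>2 / 2"
    unfolding power2_norm_eq_inner s_def inner_add_left inner_add_right by (simp add: inner_commute)
  then have "norm s = \<alpha> * ((norm s)\<^sup>2 / 2) + p \<bullet> s"
    using vs by (simp add: p_def s_def inner_diff_left)
  then have eq: "(\<alpha> - 1) * norm s * (norm s / 2) = norm s * (1 - norm s / 2) - p \<bullet> s"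
    by (simp add: power2_eq_square algebra_simps)
  have "\<bar>\<alpha> - 1\<bar> * norm s * (norm s / 2) = \<bar>(\<alpha> - 1) * norm s * (norm s / 2)\<bar>"
    by (simp add: abs_mult)
  also have "\<dots> = \<bar>norm s * (1 - norm s / 2) - p \<bullet> s\<bar>"
    by (simp only: eq)
  also have "\<dots> \<le> norm s * \<bar>1 - norm s / 2\<bar> + \<bar>p \<bullet> s\<bar>"
    using abs_triangle_ineq4[of "norm s * (1 - norm s / 2)" "p \<bullet> s"] by (simp add: abs_mult)
  also have "\<dots> \<le> norm s * \<delta> + \<delta> * norm s"
  proof (rule add_mono)
    show "norm s * \<bar>1 - norm s / 2\<bar> \<le> norm s * \<delta>"
      using s_lower s_upper by (intro mult_left_mono) (simp_all add: abs_le_iff s_def)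
    show "\<bar>p \<bullet> s\<bar> \<le> \<delta> * norm s"
      using Cauchy_Schwarz_ineq2[of p s] mult_right_mono[OF p norm_ge_zero[of s]] by linarith
  qed
  finally have "norm s * (\<bar>\<alpha> - 1\<bar> * norm s) \<le> norm s * (4 * \<delta>)"
    by (simp add: algebra_simps)
  moreover have "0 < norm s"
    unfolding s_def using s_lower small by linarith
  ultimately have "\<bar>\<alpha> - 1\<bar> * norm s \<le> 4 * \<delta>"
    by (simp only: mult_le_cancel_left_pos)
  moreover have "\<bar>\<alpha> - 1\<bar> \<le> \<bar>\<alpha> - 1\<bar> * norm s"
    using s_lower small by (simp add: mult_le_cancel_left1 s_def)
  ultimately show ?thesis
    unfolding \<alpha>_def by linarith
qed

lemma norm_diff_unit_le_of_cross_le: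
  fixes v n1 n2 :: "real^3"
  assumes n1: "norm n1 = 1" and n2: "norm n2 = 1" and s0: "n1 + n2 \<noteq> 0"
    and vs: "v \<bullet> (n1 + n2) = norm (n1 + n2)"
    and d1: "norm (cross3 v n1) \<le> \<delta>" and d2: "norm (cross3 v n2) \<le> \<delta>" and small: "\<delta> \<le> 1/2"
  shows "norm (v - n1) \<le> 5 * \<delta>"
proof -
  have "(n1 + n2) + (n1 - n2) = 2 *\<^sub>R n1"
    by (simp add: scaleR_2)
  then have "2 \<le> norm (n1 + n2) + norm (n1 - n2)"
    using n1 norm_triangle_ineq[of "n1 + n2" "n1 - n2"] by simp
  then have "2 - 2 * \<delta> \<le> norm (n1 + n2)"
    using norm_diff_le_of_cross_le[OF n1 n2 s0 vs d1 d2] by linarith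
  then have "\<bar>v \<bullet> n1 - 1\<bar> \<le> 4 * \<delta>"
    using abs_inner_unit_sub_1_le[OF n1 n2 vs d1 _ small] by blast
  moreover have "norm (v - (v \<bullet> n1) *\<^sub>R n1) \<le> \<delta>"
    using d1 norm_cross_unit_eq[OF n1] by simp
  moreover have "(v \<bullet> n1 - 1) *\<^sub>R n1 + (v - (v \<bullet> n1) *\<^sub>R n1) = v - n1"
    by (simp add: algebra_simps)
  then have "norm (v - n1) \<le> norm ((v \<bullet> n1 - 1) *\<^sub>R n1) + norm (v - (v \<bullet> n1) *\<^sub>R n1)"
    by (metis norm_triangle_ineq)
  moreover have "norm ((v \<bullet> n1 - 1) *\<^sub>R n1) = \<bar>v \<bullet> n1 - 1\<bar>"
    using n1 by simp
  ultimately show ?thesis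
    by linarith
qed

section \<open>Triangles\<close>

lemma not_collinear_imp_distinct: "\<not> collinear {x, y, z} \<Longrightarrow> x \<noteq> y \<and> x \<noteq> z \<and> y \<noteq> z"
  by (auto simp: collinear_3_eq_affine_dependent)

lemma cross_sub_eq_0_iff_collinear: "cross3 (b - a) (c - a) = 0 \<longleftrightarrow> collinear {a, b, c}"
  by (simp add: cross_eq_0 collinear_3[of b a c, symmetric] insert_commute)

lemma cross_sub_eq_cyclic: "cross3 (y - x) (z - x) = cross3 x y + cross3 y z + cross3 z x"
  by (simp add: cross3_simps)

lemma cross_sub_shift: "cross3 (b - c) (c - a) = cross3 (b - a) (c - a)"
  by (simp add: cross3_simps)

lemma cross_sub_relabel:
  assumes "{a, b, c} = {x, y, z}" "\<not> collinear {a, b, c}" "\<not> collinear {x, y, z}"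
  shows "cross3 (y - x) (z - x) = cross3 (b - a) (c - a) \<or>
    cross3 (y - x) (z - x) = - cross3 (b - a) (c - a)"
proof -
  have "x \<in> {a, b, c}" "y \<in> {a, b, c}" "z \<in> {a, b, c}"
    using assms(1) by auto
  then have "(x, y, z) \<in> {(a, b, c), (b, c, a), (c, a, b), (b, a, c), (a, c, b), (c, b, a)}"
    using not_collinear_imp_distinct[OF assms(3)] by auto
  then show ?thesis
    unfolding cross_sub_eq_cyclic
    using cross_skew[of b a] cross_skew[of c b] cross_skew[of a c] by (auto simp: algebra_simps)
qed

lemma tri_verts_convex_hull:
  "\<not> collinear {x, y, z} \<Longrightarrow> tri_verts (convex hull {x, y, z}) = {x, y, z}"
  unfolding tri_verts_def
  by (auto simp: extreme_point_of_convex_hull_affine_independent collinear_3_eq_affine_dependent)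

lemma triangle_hull_eq_imp_vertices_eq:
  fixes a b c x y z :: R3
  assumes "\<not> collinear {a, b, c}" "\<not> collinear {x, y, z}"
    and "convex hull {a, b, c} = convex hull {x, y, z}"
  shows "{a, b, c} = {x, y, z}"
  using tri_verts_convex_hull[OF assms(1)] tri_verts_convex_hull[OF assms(2)] assms(3) by metis

lemma tri_area_convex_hull:
  assumes "\<not> collinear {a, b, c}"
  shows "tri_area (convex hull {a, b, c}) = norm (cross3 (b - a) (c - a)) / 2"
  unfolding tri_area_def
proof (rule the_equality)
  fix A
  assume "\<exists>x y z. \<not> collinear {x, y, z} \<and> convex hull {a, b, c} = convex hull {x, y, z} \<and>
    A = norm (cross3 (y - x) (z - x)) / 2"
  then obtain x y z where "\<not> collinear {x, y, z}" "convex hull {a, b, c} = convex hull {x, y, z}"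
    and "A = norm (cross3 (y - x) (z - x)) / 2"
    by blast
  with assms show "A = norm (cross3 (b - a) (c - a)) / 2"
    using cross_sub_relabel triangle_hull_eq_imp_vertices_eq by (metis norm_minus_cancel)
qed (use assms in blast)

lemma is_unit_normal_convex_hull:
  assumes "\<not> collinear {a, b, c}" "is_unit_normal (convex hull {a, b, c}) v"
  shows "v = (1 / norm (cross3 (b - a) (c - a))) *\<^sub>R cross3 (b - a) (c - a) \<or>
    v = - ((1 / norm (cross3 (b - a) (c - a))) *\<^sub>R cross3 (b - a) (c - a))"
proof -
  obtain x y z where xyz: "\<not> collinear {x, y, z}" "convex hull {a, b, c} = convex hull {x, y, z}"
    and v: "v = (1 / norm (cross3 (y - x) (z - x))) *\<^sub>R cross3 (y - x) (z - x) \<or>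
      v = - ((1 / norm (cross3 (y - x) (z - x))) *\<^sub>R cross3 (y - x) (z - x))"
    using assms(2) unfolding is_unit_normal_def by blast
  have "cross3 (y - x) (z - x) = cross3 (b - a) (c - a) \<or>
    cross3 (y - x) (z - x) = - cross3 (b - a) (c - a)"
    using cross_sub_relabel triangle_hull_eq_imp_vertices_eq assms(1) xyz by metis
  with v show ?thesis
    by auto
qed

lemma is_unit_normal_norm: "is_unit_normal K v \<Longrightarrow> norm v = 1"
  unfolding is_unit_normal_def by (auto simp: cross_sub_eq_0_iff_collinear)

lemma tri_edge_labelling:
  assumes "is_triangle K" "e \<in> tri_edges K"
  obtains a b c where "\<not> collinear {a, b, c}" "K = convex hull {a, b, c}"
    "e = closed_segment a b" "closed_segment a c \<in> tri_edges K"
proof -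
  obtain x y z where xyz: "\<not> collinear {x, y, z}" and K: "K = convex hull {x, y, z}"
    using assms(1) unfolding is_triangle_def by blast
  have verts: "tri_verts K = {x, y, z}"
    unfolding K by (rule tri_verts_convex_hull[OF xyz])
  obtain a b where ab: "a \<in> {x, y, z}" "b \<in> {x, y, z}" "a \<noteq> b" "e = closed_segment a b"
    using assms(2) unfolding tri_edges_def verts by blast
  then obtain c where abc: "{a, b, c} = {x, y, z}"
    by (auto simp: insert_commute)
  then have abc_nc: "\<not> collinear {a, b, c}"
    using xyz by simp
  show ?thesis
  proof (rule that[OF abc_nc _ ab(4)])
    show "K = convex hull {a, b, c}"
      using K abc by simp
    show "closed_segment a c \<in> tri_edges K"
      unfolding tri_edges_def verts using not_collinear_imp_distinct[OF abc_nc] abc by blast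
  qed
qed

lemma inner_eq_on_convex_hull_3:
  assumes "p \<in> convex hull {a, b, c}" "w \<bullet> b = w \<bullet> a" "w \<bullet> c = w \<bullet> a"
  shows "w \<bullet> p = w \<bullet> a"
proof -
  obtain s t r where p: "p = s *\<^sub>R a + t *\<^sub>R b + r *\<^sub>R c" and "s + t + r = 1"
    using assms(1) unfolding convex_hull_3 by blast
  have "w \<bullet> p = (s + t + r) * (w \<bullet> a)"
    using assms(2,3) by (simp add: p inner_add_right distrib_right)
  then show ?thesis
    using \<open>s + t + r = 1\<close> by simp
qed

lemma inner_cross_convex_hull_diff_eq_0:
  assumes "p \<in> convex hull {a, b, c}" "q \<in> convex hull {a, b, c}"
  shows "cross3 (b - a) (c - a) \<bullet> (p - q) = 0"
proof -
  have "(b - a) \<bullet> cross3 (b - a) (c - a) = 0" "(c - a) \<bullet> cross3 (b - a) (c - a) = 0"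
    by (simp_all add: dot_cross_self)
  then have "cross3 (b - a) (c - a) \<bullet> b = cross3 (b - a) (c - a) \<bullet> a"
    "cross3 (b - a) (c - a) \<bullet> c = cross3 (b - a) (c - a) \<bullet> a"
    unfolding inner_diff_left inner_commute[of "cross3 (b - a) (c - a)"] by linarith+
  then show ?thesis
    using inner_eq_on_convex_hull_3[OF assms(1)] inner_eq_on_convex_hull_3[OF assms(2)]
    by (simp add: inner_diff_right)
qed


section \<open>The discrete gradient\<close>

definition is_midpoint_gradient :: "(R3 set \<Rightarrow> R3) \<Rightarrow> R3 set \<Rightarrow> real^3^3 \<Rightarrow> bool" where
  "is_midpoint_gradient n K M \<longleftrightarrow>
    (\<forall>a b c. a \<in> tri_verts K \<and> b \<in> tri_verts K \<and> c \<in> tri_verts K \<and> a \<noteq> b \<and> a \<noteq> c \<and> b \<noteq> c \<longrightarrow>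
      M *v ((1/2) *\<^sub>R (a + b) - (1/2) *\<^sub>R (a + c)) = n (closed_segment a b) - n (closed_segment a c)) \<and>
    (\<forall>w. (\<forall>p\<in>K. \<forall>q\<in>K. w \<bullet> (p - q) = 0) \<longrightarrow> M *v w = 0)"

lemma Dn_eq_The: "Dn n K = (THE M. is_midpoint_gradient n K M)"
  unfolding Dn_def is_midpoint_gradient_def ..

lemma matrix_vector_mult_midpoint_diff_eq_iff:
  fixes M :: "real^'n^'m"
  shows "M *v ((1/2) *\<^sub>R (a + b) - (1/2) *\<^sub>R (a + c)) = y \<longleftrightarrow> M *v (b - c) = 2 *\<^sub>R y"
proof -
  have "M *v ((1/2) *\<^sub>R (a + b) - (1/2) *\<^sub>R (a + c)) = (1/2) *\<^sub>R (M *v (b - c))"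
    by (simp add: matrix_vector_mult_scaleR flip: scaleR_diff_right)
  then show ?thesis
    by auto
qed

lemma is_midpoint_gradient_convex_hullD:
  assumes nc: "\<not> collinear {a, b, c}" and M: "is_midpoint_gradient n (convex hull {a, b, c}) M"
  shows "M *v (b - c) = 2 *\<^sub>R (n (closed_segment a b) - n (closed_segment a c))"
    and "M *v (c - a) = 2 *\<^sub>R (n (closed_segment b c) - n (closed_segment a b))"
    and "M *v cross3 (b - c) (c - a) = 0"
proof -
  have "a \<noteq> b" "a \<noteq> c" "b \<noteq> c"
    using not_collinear_imp_distinct[OF nc] by auto
  then have "M *v ((1/2) *\<^sub>R (p + q) - (1/2) *\<^sub>R (p + r)) =
      n (closed_segment p q) - n (closed_segment p r)"
    if "(p, q, r) \<in> {(a, b, c), (b, c, a)}" for p q r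
    using M that unfolding is_midpoint_gradient_def tri_verts_convex_hull[OF nc] by auto
  from this[of a b c] this[of b c a]
  show "M *v (b - c) = 2 *\<^sub>R (n (closed_segment a b) - n (closed_segment a c))"
    and "M *v (c - a) = 2 *\<^sub>R (n (closed_segment b c) - n (closed_segment a b))"
    by (simp_all add: matrix_vector_mult_midpoint_diff_eq_iff closed_segment_commute[of b a])
  show "M *v cross3 (b - c) (c - a) = 0"
    using M inner_cross_convex_hull_diff_eq_0 unfolding is_midpoint_gradient_def cross_sub_shift
    by blast
qed

lemma is_midpoint_gradient_convex_hullI:
  fixes M :: "real^3^3"
  assumes nc: "\<not> collinear {a, b, c}"
    and bc: "M *v (b - c) = 2 *\<^sub>R (n (closed_segment a b) - n (closed_segment a c))"
    and ca: "M *v (c - a) = 2 *\<^sub>R (n (closed_segment b c) - n (closed_segment a b))"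
    and normal: "M *v cross3 (b - c) (c - a) = 0"
  shows "is_midpoint_gradient n (convex hull {a, b, c}) M"
  unfolding is_midpoint_gradient_def tri_verts_convex_hull[OF nc]
proof (intro conjI allI impI)
  have "M *v (a - b) = - (M *v (b - c) + M *v (c - a))"
    by (simp add: matrix_vector_mult_diff_distrib)
  also have "\<dots> = 2 *\<^sub>R (n (closed_segment a c) - n (closed_segment b c))"
    unfolding bc ca by (simp add: algebra_simps)
  finally have ab: "M *v (a - b) = 2 *\<^sub>R (n (closed_segment a c) - n (closed_segment b c))" .
  have "M *v (c - b) = - (M *v (b - c))" "M *v (a - c) = - (M *v (c - a))"
    "M *v (b - a) = - (M *v (a - b))"
    by (simp_all add: matrix_vector_mult_diff_distrib)
  note differences = bc ca ab this
  fix p q r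
  assume "p \<in> {a, b, c} \<and> q \<in> {a, b, c} \<and> r \<in> {a, b, c} \<and> p \<noteq> q \<and> p \<noteq> r \<and> q \<noteq> r"
  then have "(p, q, r) \<in> {(a, b, c), (b, c, a), (c, a, b), (a, c, b), (b, a, c), (c, b, a)}"
    by auto
  then show "M *v ((1/2) *\<^sub>R (p + q) - (1/2) *\<^sub>R (p + r)) =
      n (closed_segment p q) - n (closed_segment p r)"
    unfolding matrix_vector_mult_midpoint_diff_eq_iff
    by (elim insertE emptyE)
      (simp_all add: differences closed_segment_commute[of b a] closed_segment_commute[of c a]
        closed_segment_commute[of c b] scaleR_right_diff_distrib)
next
  fix w
  assume "\<forall>p\<in>convex hull {a, b, c}. \<forall>q\<in>convex hull {a, b, c}. w \<bullet> (p - q) = 0"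
  then have "w \<bullet> (b - c) = 0" "w \<bullet> (c - a) = 0"
    by (simp_all add: hull_inc)
  moreover have "cross3 (b - c) (c - a) \<noteq> 0"
    using nc by (metis cross_sub_eq_0_iff_collinear cross_sub_shift)
  ultimately show "M *v w = 0"
    using matrix_vector_mult_orthogonal_eq_0 normal by blast
qed

lemma Dn_convex_hull:
  assumes nc: "\<not> collinear {a, b, c}"
  shows "Dn n (convex hull {a, b, c}) *v (b - c) = 2 *\<^sub>R (n (closed_segment a b) - n (closed_segment a c))"
proof -
  have frame: "cross3 (b - c) (c - a) \<noteq> 0"
    using nc by (metis cross_sub_eq_0_iff_collinear cross_sub_shift)
  obtain M0 where M0: "M0 *v (b - c) = 2 *\<^sub>R (n (closed_segment a b) - n (closed_segment a c))"
    "M0 *v (c - a) = 2 *\<^sub>R (n (closed_segment b c) - n (closed_segment a b))"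
    "M0 *v cross3 (b - c) (c - a) = 0"
    using ex_matrix_on_cross_frame[OF frame] by metis
  have "Dn n (convex hull {a, b, c}) = M0"
    unfolding Dn_eq_The
  proof (rule the_equality)
    show "is_midpoint_gradient n (convex hull {a, b, c}) M0"
      using is_midpoint_gradient_convex_hullI[OF nc M0] .
  next
    fix M
    assume "is_midpoint_gradient n (convex hull {a, b, c}) M"
    then show "M = M0"
      using M0 is_midpoint_gradient_convex_hullD[OF nc] matrix_eq_on_cross_frame[OF frame]
      by simp
  qed
  with M0 show ?thesis
    by simp
qed

section \<open>Edge directors are close to the unit normals\<close>

lemma director_cross_normal_le:
  fixes a b c v w :: R3 and M :: "real^3^3"
  assumes "v \<bullet> (b - a) = 0" "w \<bullet> (c - a) = 0" "M *v (b - c) = 2 *\<^sub>R (v - w)"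
  shows "norm (cross3 v (cross3 (b - a) (c - a))) \<le>
    norm M * norm (b - c) * norm (c - a) * norm (b - a) / 2"
proof -
  have "cross3 v (cross3 (b - a) (c - a)) = (v \<bullet> (c - a)) *\<^sub>R (b - a)"
    using assms(1) by (simp add: Lagrange)
  moreover have "v \<bullet> (c - a) = (1/2) * ((M *v (b - c)) \<bullet> (c - a))"
    using assms(2,3) by (simp add: inner_diff_left)
  moreover have "\<bar>(M *v (b - c)) \<bullet> (c - a)\<bar> \<le> norm (M *v (b - c)) * norm (c - a)"
    by (rule Cauchy_Schwarz_ineq2)
  moreover have "norm (M *v (b - c)) * norm (c - a) \<le> norm M * norm (b - c) * norm (c - a)"
    by (intro mult_right_mono norm_matrix_vector_mult_le norm_ge_zero)
  ultimately show ?thesis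
    by (simp add: abs_mult mult_right_mono)
qed

lemma director_cross_unit_normal_le:
  fixes a b c v w nK :: R3 and M :: "real^3^3"
  assumes "Cs > 0" and nc: "\<not> collinear {a, b, c}"
    and area: "(1 / Cs) * (diameter (convex hull {a, b, c}))\<^sup>2 \<le> tri_area (convex hull {a, b, c})"
    and nK: "is_unit_normal (convex hull {a, b, c}) nK"
    and "v \<bullet> (b - a) = 0" "w \<bullet> (c - a) = 0" "M *v (b - c) = 2 *\<^sub>R (v - w)"
  shows "norm (cross3 v nK) \<le> Cs / 4 * norm (b - a) * norm M"
proof -
  define d where "d = diameter (convex hull {a, b, c})"
  define N where "N = cross3 (b - a) (c - a)"
  have "bounded (convex hull {a, b, c})"
    by (simp add: finite_imp_bounded_convex_hull)
  moreover have "a \<in> convex hull {a, b, c}" "b \<in> convex hull {a, b, c}" "c \<in> convex hull {a, b, c}"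
    by (simp_all add: hull_inc)
  ultimately have "norm (b - c) \<le> d" "norm (c - a) \<le> d"
    unfolding d_def by (metis diameter_bounded_bound dist_norm)+
  moreover have "d\<^sup>2 \<le> Cs / 2 * norm N"
    using area \<open>Cs > 0\<close> by (simp add: d_def N_def tri_area_convex_hull[OF nc] field_simps)
  ultimately have edges_le: "norm (b - c) * norm (c - a) \<le> Cs / 2 * norm N"
    using mult_mono[of "norm (b - c)" d "norm (c - a)" d] by (simp add: power2_eq_square)
  have "norm M * norm (b - c) * norm (c - a) * norm (b - a) / 2 \<le>
      Cs / 4 * norm (b - a) * norm M * norm N"
    using mult_left_mono[OF edges_le, of "norm M * norm (b - a) / 2"] by (simp add: algebra_simps)
  then have "norm (cross3 v N) \<le> Cs / 4 * norm (b - a) * norm M * norm N"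
    using director_cross_normal_le[OF assms(5-7)] unfolding N_def by linarith
  moreover have "N \<noteq> 0"
    using nc by (simp add: N_def cross_sub_eq_0_iff_collinear)
  moreover have "norm (cross3 v nK) = norm (cross3 v N) / norm N"
    using is_unit_normal_convex_hull[OF nc nK] by (auto simp: N_def cross_mult_right)
  ultimately show ?thesis
    by (simp add: divide_le_eq)
qed

lemma shared_edge_mem_tri_edges:
  assumes T: "triangular_complex T" and "K \<in> T" "K' \<in> T" "K \<noteq> K'"
    and e: "K \<inter> K' \<in> complex_edges T"
  shows "K \<inter> K' \<in> tri_edges K" "K \<inter> K' \<in> tri_edges K'"
proof -
  obtain p q where "p \<noteq> q" "K \<inter> K' = closed_segment p q"
    using e unfolding complex_edges_def tri_edges_def by blast
  then have "K \<inter> K' \<noteq> {}" "\<nexists>v. K \<inter> K' = {v}"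
    by (auto simp: closed_segment_eq_sing)
  then show "K \<inter> K' \<in> tri_edges K" "K \<inter> K' \<in> tri_edges K'"
    using T assms(2-4) unfolding triangular_complex_def by blast+
qed

lemma inner_n0_eq_1D:
  assumes "v \<bullet> n0 nb K K' = 1"
  shows "nb K + nb K' \<noteq> 0" "v \<bullet> (nb K + nb K') = norm (nb K + nb K')"
proof -
  show "nb K + nb K' \<noteq> 0"
    using assms by (auto simp: n0_def)
  moreover have "(1 / norm (nb K + nb K')) * (v \<bullet> (nb K + nb K')) = 1"
    using assms unfolding n0_def inner_scaleR_right .
  ultimately show "v \<bullet> (nb K + nb K') = norm (nb K + nb K')"
    by (simp add: field_simps)
qed

lemma director_cross_normal_le_diameter:
  assumes reg: "regular_complex Cs T" and "Cs > 0" and dir: "pseudo_unit_director T nb n"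
    and L: "L \<in> T" "is_unit_normal L (nb L)" and e: "e \<in> tri_edges L" and S: "e \<subseteq> S" "bounded S"
  shows "norm (cross3 (n e) (nb L)) \<le> Cs / 4 * diameter S * norm (Dn n L)"
proof -
  have "is_triangle L" and area: "(1 / Cs) * (diameter L)\<^sup>2 \<le> tri_area L"
    using reg L unfolding regular_complex_def triangular_complex_def by auto
  then obtain a b c where nc: "\<not> collinear {a, b, c}" and L_abc: "L = convex hull {a, b, c}"
    and e_ab: "e = closed_segment a b" and ac: "closed_segment a c \<in> tri_edges L"
    using e tri_edge_labelling by metis
  have "e \<in> complex_edges T" "closed_segment a c \<in> complex_edges T"
    using L(1) e ac unfolding complex_edges_def by blast+
  then have "n e \<bullet> (b - a) = 0" "n (closed_segment a c) \<bullet> (c - a) = 0"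
    using dir e_ab unfolding pseudo_unit_director_def by blast+
  moreover have "Dn n L *v (b - c) = 2 *\<^sub>R (n e - n (closed_segment a c))"
    using Dn_convex_hull[OF nc] by (simp add: L_abc e_ab)
  ultimately have "norm (cross3 (n e) (nb L)) \<le> Cs / 4 * norm (b - a) * norm (Dn n L)"
    using director_cross_unit_normal_le[OF \<open>Cs > 0\<close> nc] area L(2) by (simp add: L_abc)
  also have "\<dots> \<le> Cs / 4 * diameter S * norm (Dn n L)"
  proof -
    have "a \<in> S" "b \<in> S"
      using S(1) e_ab by auto
    then have "norm (b - a) \<le> diameter S"
      using diameter_bounded_bound[OF S(2)] by (metis dist_norm)
    then show ?thesis
      using \<open>Cs > 0\<close> by (intro mult_right_mono mult_left_mono) auto
  qed
  finally show ?thesis .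
qed

lemma pseudo_unit_director_near_unit_normal:
  assumes "Cs > 0" and reg: "regular_complex Cs T" and normals: "\<forall>L\<in>T. is_unit_normal L (nb L)"
    and dir: "pseudo_unit_director T nb n" and K: "K \<in> T" "K' \<in> T" "K \<noteq> K'"
    and e: "e = K \<inter> K'" "e \<in> complex_edges T"
    and small: "diameter K * (norm (Dn n K) + norm (Dn n K')) \<le> 2 / Cs"
  shows "norm (n e - nb K) \<le> 5 * Cs / 4 * (diameter K * (norm (Dn n K) + norm (Dn n K')))"
proof -
  define \<delta> where "\<delta> = Cs / 4 * (diameter K * (norm (Dn n K) + norm (Dn n K')))"
  have tri: "triangular_complex T"
    using reg by (simp add: regular_complex_def)
  then have "bounded K"
    using K(1) unfolding triangular_complex_def is_triangle_def
    by (auto simp: finite_imp_bounded_convex_hull)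
  have edges: "e \<in> tri_edges K" "e \<in> tri_edges K'"
    using shared_edge_mem_tri_edges[OF tri K] e by simp_all
  have "norm (cross3 (n e) (nb L)) \<le> \<delta>" if L: "L \<in> {K, K'}" for L
  proof -
    have "norm (cross3 (n e) (nb L)) \<le> Cs / 4 * diameter K * norm (Dn n L)"
      using director_cross_normal_le_diameter[OF reg \<open>Cs > 0\<close> dir, of L e K] L normals K edges e(1)
        \<open>bounded K\<close> by auto
    also have "\<dots> \<le> Cs / 4 * diameter K * (norm (Dn n K) + norm (Dn n K'))"
      using L \<open>Cs > 0\<close> diameter_ge_0[OF \<open>bounded K\<close>] by (intro mult_left_mono) auto
    finally show ?thesis
      by (simp add: \<delta>_def algebra_simps)
  qed
  then have "norm (cross3 (n e) (nb K)) \<le> \<delta>" "norm (cross3 (n e) (nb K')) \<le> \<delta>"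
    by simp_all
  moreover have "n e \<bullet> n0 nb K K' = 1"
    using dir K e unfolding pseudo_unit_director_def by blast
  moreover have "norm (nb K) = 1" "norm (nb K') = 1"
    using normals K is_unit_normal_norm by blast+
  moreover have "\<delta> \<le> 1/2"
    using small \<open>Cs > 0\<close> by (simp add: \<delta>_def field_simps)
  ultimately have "norm (n e - nb K) \<le> 5 * \<delta>"
    using norm_diff_unit_le_of_cross_le inner_n0_eq_1D by blast
  then show ?thesis
    by (simp add: \<delta>_def)
qed

theorem lemmaA2:
  fixes Cs :: real
  assumes "Cs > 1"
  shows "\<exists>C>0. \<exists>C'. \<forall>(T :: R3 set set) (nb :: R3 set \<Rightarrow> R3) (n :: R3 set \<Rightarrow> R3) K K' e.
     regular_complex Cs T \<and> (\<forall>L\<in>T. is_unit_normal L (nb L)) \<and>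
     pseudo_unit_director T nb n \<and>
     K \<in> T \<and> K' \<in> T \<and> K \<noteq> K' \<and> e = K \<inter> K' \<and> e \<in> complex_edges T \<and>
     diameter K * (norm (Dn n K) + norm (Dn n K')) < C
     \<longrightarrow> norm (n e - nb K) \<le> C' * (diameter K * (norm (Dn n K) + norm (Dn n K')))"
proof -
  have "Cs > 0"
    using assms by simp
  have "norm (n e - nb K) \<le> 5 * Cs / 4 * (diameter K * (norm (Dn n K) + norm (Dn n K')))"
    if "regular_complex Cs T \<and> (\<forall>L\<in>T. is_unit_normal L (nb L)) \<and> pseudo_unit_director T nb n \<and>
      K \<in> T \<and> K' \<in> T \<and> K \<noteq> K' \<and> e = K \<inter> K' \<and> e \<in> complex_edges T \<and>
      diameter K * (norm (Dn n K) + norm (Dn n K')) < 2 / Cs"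
    for T nb n K K' e
    using that by (intro pseudo_unit_director_near_unit_normal[OF \<open>Cs > 0\<close>]) auto
  moreover have "2 / Cs > 0"
    using \<open>Cs > 0\<close> by simp
  ultimately show ?thesis
    by blast
qed
end
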